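(* Let $T$ be a tree on $n$ vertices. Suppose there are a leaf $v$ of $T$ and an integer $k\ge1$ such that $|N_2(v)|=\lceil n/2\rceil-4+k$ and $|N_{\ge4}(v)|\ge k$. Then $\operatorname{diam}(\mathcal{C}_3(T))\ge\lfloor 3n/2\rfloor+1$.
   Context: For a vertex $v$ of a tree, $N_i(v)$ is the set of vertices at distance exactly $i$ from $v$ and $N_{\ge i}(v)$ the set of vertices at distance at least $i$ from $v$. A proper 3-coloring of a tree $T=(V,E)$ is a map $f\colon V\to\mathbb{Z}/3\mathbb{Z}$ with $f(u)\neq f(v)$ for every edge $uv\in E$. The 3-coloring graph $\mathcal{C}_3(T)$ has the proper 3-colorings as vertices, two colorings adjacent iff they differ at exactly one vertex; $\operatorname{diam}$ denotes graph diameter. *)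

theory Defs
  imports Main "HOL-Library.Extended_Nat" "HOL-Library.Numeral_Type" "HOL-Library.FuncSet"
begin

fun is_walk :: "('a \<Rightarrow> 'a \<Rightarrow> bool) \<Rightarrow> 'a list \<Rightarrow> bool" where
  "is_walk adj [] = False"
| "is_walk adj [x] = True"
| "is_walk adj (x # y # xs) = (adj x y \<and> is_walk adj (y # xs))"

text \<open>Graph distance (infinite if no walk exists).\<close>
definition gdist :: "'a set \<Rightarrow> ('a \<Rightarrow> 'a \<Rightarrow> bool) \<Rightarrow> 'a \<Rightarrow> 'a \<Rightarrow> enat" where
  "gdist S adj u v =
     (INF xs \<in> {xs. is_walk adj xs \<and> set xs \<subseteq> S \<and> hd xs = u \<and> last xs = v}.
        enat (length xs - 1))"

definition gdiam :: "'a set \<Rightarrow> ('a \<Rightarrow> 'a \<Rightarrow> bool) \<Rightarrow> enat" where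
  "gdiam S adj = (SUP u \<in> S. SUP v \<in> S. gdist S adj u v)"

definition simple_graph :: "'a set \<Rightarrow> ('a \<Rightarrow> 'a \<Rightarrow> bool) \<Rightarrow> bool" where
  "simple_graph V E \<longleftrightarrow> finite V \<and> (\<forall>u v. E u v \<longrightarrow> u \<in> V \<and> v \<in> V)
     \<and> (\<forall>u v. E u v \<longrightarrow> E v u) \<and> (\<forall>u. \<not> E u u)"

definition connected_graph :: "'a set \<Rightarrow> ('a \<Rightarrow> 'a \<Rightarrow> bool) \<Rightarrow> bool" where
  "connected_graph V E \<longleftrightarrow> V \<noteq> {} \<and> (\<forall>u\<in>V. \<forall>v\<in>V. gdist V E u v \<noteq> \<infinity>)"

definition has_cycle :: "'a set \<Rightarrow> ('a \<Rightarrow> 'a \<Rightarrow> bool) \<Rightarrow> bool" where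
  "has_cycle V E \<longleftrightarrow> (\<exists>xs. length xs \<ge> 3 \<and> distinct xs \<and> set xs \<subseteq> V
      \<and> is_walk E xs \<and> E (last xs) (hd xs))"

definition is_tree :: "'a set \<Rightarrow> ('a \<Rightarrow> 'a \<Rightarrow> bool) \<Rightarrow> bool" where
  "is_tree V E \<longleftrightarrow> simple_graph V E \<and> connected_graph V E \<and> \<not> has_cycle V E"

definition is_leaf :: "'a set \<Rightarrow> ('a \<Rightarrow> 'a \<Rightarrow> bool) \<Rightarrow> 'a \<Rightarrow> bool" where
  "is_leaf V E v \<longleftrightarrow> v \<in> V \<and> card {u \<in> V. E v u} = 1"

definition nbhd_eq :: "'a set \<Rightarrow> ('a \<Rightarrow> 'a \<Rightarrow> bool) \<Rightarrow> 'a \<Rightarrow> nat \<Rightarrow> 'a set" where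
  "nbhd_eq V E v i = {u \<in> V. gdist V E v u = enat i}"

definition nbhd_ge :: "'a set \<Rightarrow> ('a \<Rightarrow> 'a \<Rightarrow> bool) \<Rightarrow> 'a \<Rightarrow> nat \<Rightarrow> 'a set" where
  "nbhd_ge V E v i = {u \<in> V. gdist V E v u \<ge> enat i}"

text \<open>Proper 3-colourings with colours in Z/3Z (the type 3), as extensional maps on V.\<close>
definition proper_3col :: "'a set \<Rightarrow> ('a \<Rightarrow> 'a \<Rightarrow> bool) \<Rightarrow> ('a \<Rightarrow> 3) \<Rightarrow> bool" where
  "proper_3col V E f \<longleftrightarrow> f \<in> V \<rightarrow>\<^sub>E (UNIV :: 3 set) \<and> (\<forall>u v. E u v \<longrightarrow> f u \<noteq> f v)"

definition col3_vertices :: "'a set \<Rightarrow> ('a \<Rightarrow> 'a \<Rightarrow> bool) \<Rightarrow> ('a \<Rightarrow> 3) set" where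
  "col3_vertices V E = {f. proper_3col V E f}"

definition col3_adj :: "'a set \<Rightarrow> ('a \<Rightarrow> 3) \<Rightarrow> ('a \<Rightarrow> 3) \<Rightarrow> bool" where
  "col3_adj V f g \<longleftrightarrow> card {x \<in> V. f x \<noteq> g x} = 1"

definition diam_C3 :: "'a set \<Rightarrow> ('a \<Rightarrow> 'a \<Rightarrow> bool) \<Rightarrow> enat" where
  "diam_C3 V E = gdiam (col3_vertices V E) (col3_adj V)"

end

(* A proper 3-colouring of a tree lifts to an integer height function that changes by +-1
   along every edge; the lift is unique up to adding a multiple of 3, and one recolouring
   step moves the height of one vertex by 2.  So a recolouring walk from f to g carries a
   height hf of f to a height of g of the form hg + 6j, and its length is at least half the
   l1-distance between hf and hg + 6j.  Rooting the tree at the leaf v, take hf = depth and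
   hg = depth - 2 * offset, where offset is -1, 0, 1, 2 on the levels 0, 1, 2 and >= 3 and
   is raised by 1 on k vertices of depth >= 4 that are closed upwards in depth.  The assumed
   sizes of N_2(v) and N_>=4(v) make the l1-distances for j = 0 and j = 1, and hence for
   every j, at least floor(3n/2) + 1. *)

theory Submission
  imports Defs
begin

section \<open>Walks and graph distance\<close>

lemma is_walk_nonempty: "is_walk adj xs \<Longrightarrow> xs \<noteq> []"
  by (cases xs) auto

lemma is_walk_snoc: "is_walk adj xs \<Longrightarrow> adj (last xs) y \<Longrightarrow> is_walk adj (xs @ [y])"
  by (induction adj xs rule: is_walk.induct) auto

lemma is_walk_butlast:
  "is_walk adj xs \<Longrightarrow> 2 \<le> length xs \<Longrightarrow>
     is_walk adj (butlast xs) \<and> adj (last (butlast xs)) (last xs)"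
proof (induction adj xs rule: is_walk.induct)
  case (3 adj x y xs)
  then show ?case by (cases xs) auto
qed auto

lemma is_walk_invariant:
  assumes "is_walk adj xs" "\<And>a b. adj a b \<Longrightarrow> F a = F b"
  shows "F (hd xs) = F (last xs)"
  using assms(1)
proof (induction xs rule: induct_list012)
  case (3 x y zs)
  have "F x = F y"
    using "3.prems" by (intro assms(2)) simp
  moreover have "F y = F (last (y # zs))"
    using 3 by simp
  ultimately show ?case
    by simp
qed simp_all

lemma gdist_le_walk:
  "is_walk adj xs \<Longrightarrow> set xs \<subseteq> S \<Longrightarrow> hd xs = u \<Longrightarrow> last xs = w \<Longrightarrow>
     gdist S adj u w \<le> enat (length xs - 1)"
  unfolding gdist_def by (rule INF_lower) blast

lemma gdist_geI:
  "(\<And>xs. is_walk adj xs \<Longrightarrow> set xs \<subseteq> S \<Longrightarrow> hd xs = u \<Longrightarrow> last xs = w \<Longrightarrow> N \<le> length xs - 1)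
     \<Longrightarrow> enat N \<le> gdist S adj u w"
  unfolding gdist_def by (rule INF_greatest) (simp only: mem_Collect_eq enat_ord_simps)

lemma gdist_shortest_walk:
  assumes "gdist S adj u w \<noteq> \<infinity>"
  obtains xs where "is_walk adj xs" "set xs \<subseteq> S" "hd xs = u" "last xs = w"
    "gdist S adj u w = enat (length xs - 1)"
proof -
  let ?L = "(\<lambda>xs. enat (length xs - 1)) ` {xs. is_walk adj xs \<and> set xs \<subseteq> S \<and> hd xs = u \<and> last xs = w}"
  have "?L \<noteq> {}"
  proof
    assume "?L = {}"
    then have "gdist S adj u w = \<infinity>"
      unfolding gdist_def by (simp add: Inf_enat_def)
    with assms show False by simp
  qed
  then have "Inf ?L \<in> ?L"
    unfolding Inf_enat_def by (auto intro: LeastI)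
  then show thesis
    using that unfolding gdist_def by auto
qed

lemma connected_graph_invariant:
  assumes "connected_graph V E" "\<And>a b. E a b \<Longrightarrow> F a = F b" "x \<in> V" "y \<in> V"
  shows "F x = F y"
proof -
  have "gdist V E x y \<noteq> \<infinity>"
    using assms(1,3,4) unfolding connected_graph_def by blast
  then obtain xs where "is_walk E xs" "hd xs = x" "last xs = y"
    by (rule gdist_shortest_walk)
  then show ?thesis
    using is_walk_invariant[of E xs F, OF _ assms(2)] by simp
qed

section \<open>Depth in a rooted tree\<close>

locale rooted_tree =
  fixes V :: "'a set" and E :: "'a \<Rightarrow> 'a \<Rightarrow> bool" and r :: 'a
  assumes tree: "is_tree V E" and root_in_V: "r \<in> V"
begin

definition depth :: "'a \<Rightarrow> nat" where
  "depth x = the_enat (gdist V E r x)"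

lemma simple_graph: "simple_graph V E"
  using tree unfolding is_tree_def by blast

lemma connected_graph: "connected_graph V E"
  using tree unfolding is_tree_def by blast

lemma finite_V: "finite V"
  using simple_graph unfolding simple_graph_def by blast

lemma edge_in_V: "E a b \<Longrightarrow> a \<in> V \<and> b \<in> V"
  using simple_graph unfolding simple_graph_def by blast

lemma edge_sym: "E a b \<Longrightarrow> E b a"
  using simple_graph unfolding simple_graph_def by blast

lemma edge_irrefl: "\<not> E a a"
  using simple_graph unfolding simple_graph_def by blast

lemma gdist_root_eq_depth:
  assumes "x \<in> V"
  shows "gdist V E r x = enat (depth x)"
proof -
  have "gdist V E r x \<noteq> \<infinity>"
    using connected_graph root_in_V assms unfolding connected_graph_def by blast
  then show ?thesis
    unfolding depth_def by auto
qed

lemma depth_shortest_walk: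
  assumes "x \<in> V"
  obtains xs where "is_walk E xs" "set xs \<subseteq> V" "hd xs = r" "last xs = x"
    "length xs = Suc (depth x)"
proof -
  have "gdist V E r x \<noteq> \<infinity>"
    using gdist_root_eq_depth[OF assms] by simp
  then obtain xs where "is_walk E xs" "set xs \<subseteq> V" "hd xs = r" "last xs = x"
    "gdist V E r x = enat (length xs - 1)"
    by (rule gdist_shortest_walk)
  then show thesis
    using that gdist_root_eq_depth[OF assms] is_walk_nonempty by fastforce
qed

lemma depth_le_walk:
  assumes "is_walk E xs" "set xs \<subseteq> V" "hd xs = r"
  shows "depth (last xs) \<le> length xs - 1"
proof -
  have "last xs \<in> V"
    using assms(1,2) is_walk_nonempty by fastforce
  then show ?thesis
    using gdist_le_walk[OF assms refl] gdist_root_eq_depth by simp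
qed

lemma depth_root [simp]: "depth r = 0"
  using depth_le_walk[of "[r]"] root_in_V by simp

lemma depth_eq_0_iff: "x \<in> V \<Longrightarrow> depth x = 0 \<longleftrightarrow> x = r"
  by (metis depth_shortest_walk depth_root last_ConsL length_0_conv length_Suc_conv list.sel(1))

lemma depth_edge_le:
  assumes "E x y"
  shows "depth y \<le> Suc (depth x)"
proof -
  obtain xs where xs: "is_walk E xs" "set xs \<subseteq> V" "hd xs = r" "last xs = x"
    "length xs = Suc (depth x)"
    using edge_in_V[OF assms] depth_shortest_walk by metis
  have "xs \<noteq> []"
    using xs(1) by (rule is_walk_nonempty)
  then have "is_walk E (xs @ [y])" "set (xs @ [y]) \<subseteq> V" "hd (xs @ [y]) = r"
    using xs assms edge_in_V is_walk_snoc by auto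
  then show ?thesis
    using depth_le_walk xs(5) by fastforce
qed

lemma depth_parent:
  assumes "x \<in> V" "depth x = Suc t"
  obtains p where "E p x" "depth p = t"
proof -
  obtain xs where xs: "is_walk E xs" "set xs \<subseteq> V" "hd xs = r" "last xs = x"
    "length xs = Suc (Suc t)"
    using assms depth_shortest_walk by metis
  let ?p = "last (butlast xs)"
  have walk: "is_walk E (butlast xs)" and edge: "E ?p x"
    using is_walk_butlast[OF xs(1)] xs(4,5) by auto
  have "set (butlast xs) \<subseteq> V" "hd (butlast xs) = r"
    using xs(2,3,5) by (auto dest: in_set_butlastD, cases xs, auto)
  then have "depth ?p \<le> t"
    using depth_le_walk[OF walk] xs(5) by simp
  moreover have "Suc t \<le> Suc (depth ?p)"
    using depth_edge_le[OF edge] assms(2) by simp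
  ultimately show thesis
    using that edge by simp
qed

text \<open>Replacing the two ends by their parents keeps the hypotheses one level lower, until the
  two parents coincide and close a cycle.\<close>

lemma level_path_has_cycle:
  assumes "depth x = t" "depth y = t" "x \<noteq> y" "is_walk E W" "distinct W" "set W \<subseteq> V"
    "hd W = x" "last W = y" "\<forall>z\<in>set W. t \<le> depth z"
  shows "has_cycle V E"
  using assms
proof (induction t arbitrary: x y W)
  case 0
  then have "x \<in> V" "y \<in> V"
    using is_walk_nonempty hd_in_set last_in_set by blast+
  then show ?case
    using 0 depth_eq_0_iff by blast
next
  case (Suc t)
  have xyV: "x \<in> V" "y \<in> V"
    using Suc.prems(4,6-8) is_walk_nonempty hd_in_set last_in_set by blast+
  obtain x' where x': "E x' x" "depth x' = t"
    using Suc.prems(1) xyV depth_parent by metis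
  obtain y' where y': "E y' y" "depth y' = t"
    using Suc.prems(2) xyV depth_parent by metis
  have "x' \<notin> set W" "y' \<notin> set W"
    using Suc.prems(9) x'(2) y'(2) by fastforce+
  obtain W' where W: "W = x # W'" "W' \<noteq> []"
    using Suc.prems(3,4,7,8) by (cases W) (auto split: if_splits)
  show ?case
  proof (cases "x' = y'")
    case True
    have "3 \<le> length (x' # W)"
      using W by (cases W') auto
    moreover have "distinct (x' # W)" "set (x' # W) \<subseteq> V"
      "is_walk E (x' # W)" "E (last (x' # W)) (hd (x' # W))"
      using W Suc.prems x' y' True \<open>x' \<notin> set W\<close> edge_in_V edge_sym by auto
    ultimately show ?thesis
      unfolding has_cycle_def by blast
  next
    case False
    have "is_walk E (x' # W @ [y'])"
      using W Suc.prems(4,8) x'(1) y'(1) edge_sym is_walk_snoc by fastforce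
    moreover have "distinct (x' # W @ [y'])" "set (x' # W @ [y']) \<subseteq> V"
      using Suc.prems(5,6) \<open>x' \<notin> set W\<close> \<open>y' \<notin> set W\<close> False x' y' edge_in_V by auto
    moreover have "hd (x' # W @ [y']) = x'" "last (x' # W @ [y']) = y'"
      by simp_all
    moreover have "\<forall>z\<in>set (x' # W @ [y']). t \<le> depth z"
      using Suc.prems(9) x'(2) y'(2) by auto
    ultimately show ?thesis
      by (rule Suc.IH[OF x'(2) y'(2) False])
  qed
qed

lemma depth_edge:
  assumes "E x y"
  shows "depth y = Suc (depth x) \<or> depth x = Suc (depth y)"
proof -
  have "depth x \<noteq> depth y"
  proof
    assume "depth x = depth y"
    then have "has_cycle V E"
      using level_path_has_cycle[of x "depth x" y "[x, y]"] assms edge_irrefl edge_in_V by fastforce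
    then show False
      using tree unfolding is_tree_def by blast
  qed
  then show ?thesis
    using depth_edge_le[OF assms] depth_edge_le[OF edge_sym[OF assms]] by linarith
qed

lemma depth_eq_1_iff:
  assumes "x \<in> V"
  shows "depth x = 1 \<longleftrightarrow> E r x"
proof
  assume "depth x = 1"
  then obtain p where "E p x" "depth p = 0"
    using assms depth_parent by (metis One_nat_def)
  then show "E r x"
    using depth_eq_0_iff edge_in_V by blast
next
  assume "E r x"
  then show "depth x = 1"
    using depth_edge_le[of r x] depth_eq_0_iff[OF assms] edge_irrefl by fastforce
qed

lemma nbhd_eq_depth: "nbhd_eq V E r i = {x \<in> V. depth x = i}"
  unfolding nbhd_eq_def using gdist_root_eq_depth by auto

lemma nbhd_ge_depth: "nbhd_ge V E r i = {x \<in> V. i \<le> depth x}"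
  unfolding nbhd_ge_def using gdist_root_eq_depth by auto

end

section \<open>Height functions of 3-colourings\<close>

lemma num3_exhaust: "(x::3) = 0 \<or> x = 1 \<or> x = 2"
proof (cases x)
  case (of_int z)
  then have "z = 0 \<or> z = 1 \<or> z = 2" by simp arith
  then show ?thesis using of_int by auto
qed

text \<open>The representative in \<open>{1, -1}\<close> of a nonzero residue; the value at \<open>0\<close> is junk.\<close>

definition pm_lift :: "3 \<Rightarrow> int" where
  "pm_lift c = (if c = 1 then 1 else -1)"

lemma abs_pm_lift [simp]: "\<bar>pm_lift c\<bar> = 1"
  by (simp add: pm_lift_def)

lemma pm_lift_of_int: "\<bar>k\<bar> = 1 \<Longrightarrow> pm_lift (of_int k) = k"
  by (auto simp: pm_lift_def abs_if split: if_splits)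

lemma pm_lift_recolour:
  fixes a z z' :: 3
  assumes "a \<noteq> z" "a \<noteq> z'" "z \<noteq> z'"
  shows "pm_lift (z' - a) = pm_lift (z - a) - 2 * pm_lift (z' - z)"
    and "pm_lift (a - z') = pm_lift (a - z) + 2 * pm_lift (z' - z)"
  using assms num3_exhaust[of a] num3_exhaust[of z] num3_exhaust[of z']
  by (auto simp: pm_lift_def)

lemma of_int_recolour: "(z::3) \<noteq> z' \<Longrightarrow> z - 2 * of_int (pm_lift (z' - z)) = z'"
  using num3_exhaust[of z] num3_exhaust[of z'] by (auto simp: pm_lift_def)

definition height_fun :: "'a set \<Rightarrow> ('a \<Rightarrow> 'a \<Rightarrow> bool) \<Rightarrow> ('a \<Rightarrow> 3) \<Rightarrow> ('a \<Rightarrow> int) \<Rightarrow> bool" where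
  "height_fun V E c h \<longleftrightarrow>
     (\<forall>x\<in>V. of_int (h x) = c x) \<and> (\<forall>a b. E a b \<longrightarrow> h a - h b = pm_lift (c a - c b))"

lemma height_fun_recolour_vertex:
  assumes G: "simple_graph V E"
    and c: "proper_3col V E c" and c': "proper_3col V E c'"
    and z: "z \<in> V" "c z \<noteq> c' z" and same: "\<And>x. x \<in> V \<Longrightarrow> x \<noteq> z \<Longrightarrow> c' x = c x"
    and h: "height_fun V E c h"
  shows "height_fun V E c' (h(z := h z - 2 * pm_lift (c' z - c z)))"
    (is "height_fun V E c' ?h'")
  unfolding height_fun_def
proof (intro conjI ballI allI impI)
  fix x
  assume "x \<in> V"
  then show "of_int (?h' x) = c' x"
    using h same[of x] of_int_recolour[OF z(2)] unfolding height_fun_def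
    by (cases "x = z") (auto simp: algebra_simps)
next
  fix a b
  assume e: "E a b"
  then have ab: "a \<in> V" "b \<in> V" "a \<noteq> b" "c a \<noteq> c b" "c' a \<noteq> c' b"
    using G c c' unfolding simple_graph_def proper_3col_def by blast+
  have hab: "h a - h b = pm_lift (c a - c b)"
    using h e unfolding height_fun_def by blast
  consider "a = z" | "b = z" | "a \<noteq> z" "b \<noteq> z"
    by blast
  then show "?h' a - ?h' b = pm_lift (c' a - c' b)"
  proof cases
    case 1
    then have "b \<noteq> z" "c' b = c b"
      using ab(2,3) same by auto
    then show ?thesis
      using hab 1 pm_lift_recolour(1)[of "c b" "c z" "c' z"] ab(4,5) z(2) by simp
  next
    case 2
    then have "a \<noteq> z" "c' a = c a"
      using ab(1,3) same by auto
    then show ?thesis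
      using hab 2 pm_lift_recolour(2)[of "c a" "c z" "c' z"] ab(4,5) z(2) by simp
  next
    case 3
    then show ?thesis
      using hab same ab(1,2) by simp
  qed
qed

lemma height_fun_recolour:
  assumes G: "simple_graph V E"
    and c: "proper_3col V E c" and c': "proper_3col V E c'" and adj: "col3_adj V c c'"
    and h: "height_fun V E c h"
  shows "\<exists>h'. height_fun V E c' h' \<and> (\<forall>x. even (h' x - h x)) \<and> (\<Sum>x\<in>V. \<bar>h' x - h x\<bar>) = 2"
proof -
  obtain z where z: "{x \<in> V. c x \<noteq> c' x} = {z}"
    using adj unfolding col3_adj_def by (rule card_1_singletonE)
  have "z \<in> {x \<in> V. c x \<noteq> c' x}"
    unfolding z by simp
  then have zV: "z \<in> V" and cz: "c z \<noteq> c' z"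
    by simp_all
  have same: "c' x = c x" if "x \<in> V" "x \<noteq> z" for x
  proof (rule ccontr)
    assume "c' x \<noteq> c x"
    then have "x \<in> {x \<in> V. c x \<noteq> c' x}"
      using that(1) by simp
    then show False
      using that(2) unfolding z by simp
  qed
  define \<delta> where "\<delta> = - 2 * pm_lift (c' z - c z)"
  define h' where "h' = h(z := h z + \<delta>)"
  have "height_fun V E c' h'"
    using height_fun_recolour_vertex[OF G c c' zV cz same h] unfolding h'_def \<delta>_def by simp
  moreover have diff: "h' x - h x = (if x = z then \<delta> else 0)" for x
    unfolding h'_def by simp
  then have "\<forall>x. even (h' x - h x)"
    unfolding \<delta>_def by simp
  moreover have "(\<Sum>x\<in>V. \<bar>h' x - h x\<bar>) = 2"
  proof -
    have "finite V"
      using G unfolding simple_graph_def by blast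
    then have "(\<Sum>x\<in>V. \<bar>h' x - h x\<bar>) = (\<Sum>x\<in>V. if x = z then \<bar>\<delta>\<bar> else 0)"
      unfolding diff by (intro sum.cong) auto
    also have "\<dots> = 2"
      using \<open>finite V\<close> zV unfolding \<delta>_def by (simp add: abs_mult)
    finally show ?thesis .
  qed
  ultimately show ?thesis
    by blast
qed

lemma height_fun_walk:
  assumes G: "simple_graph V E"
  shows "is_walk (col3_adj V) cs \<Longrightarrow> set cs \<subseteq> col3_vertices V E \<Longrightarrow> height_fun V E (hd cs) h \<Longrightarrow>
    \<exists>h'. height_fun V E (last cs) h' \<and> (\<forall>x. even (h' x - h x)) \<and>
      (\<Sum>x\<in>V. \<bar>h' x - h x\<bar>) \<le> 2 * int (length cs - 1)"
proof (induction cs arbitrary: h rule: induct_list012)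
  case (2 c)
  then show ?case
    by (intro exI[of _ h]) simp
next
  case (3 c c' cs)
  have "proper_3col V E c" "proper_3col V E c'" "col3_adj V c c'"
    using "3.prems"(1,2) unfolding col3_vertices_def by auto
  then obtain h1 where h1: "height_fun V E c' h1" "\<forall>x. even (h1 x - h x)"
    "(\<Sum>x\<in>V. \<bar>h1 x - h x\<bar>) = 2"
    using height_fun_recolour[OF G] "3.prems"(3) by fastforce
  obtain h' where h': "height_fun V E (last (c' # cs)) h'" "\<forall>x. even (h' x - h1 x)"
    "(\<Sum>x\<in>V. \<bar>h' x - h1 x\<bar>) \<le> 2 * int (length (c' # cs) - 1)"
    using "3.IH"(2)[of h1] "3.prems"(1,2) h1(1) by auto
  have "\<forall>x. even (h' x - h x)"
  proof
    fix x
    have "h' x - h x = (h' x - h1 x) + (h1 x - h x)"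
      by simp
    then show "even (h' x - h x)"
      using h'(2) h1(2) by (metis even_add)
  qed
  moreover have "(\<Sum>x\<in>V. \<bar>h' x - h x\<bar>) \<le> (\<Sum>x\<in>V. \<bar>h' x - h1 x\<bar> + \<bar>h1 x - h x\<bar>)"
    by (rule sum_mono) linarith
  then have "(\<Sum>x\<in>V. \<bar>h' x - h x\<bar>) \<le> 2 * int (length (c # c' # cs) - 1)"
    using h'(3) h1(3) by (simp add: sum.distrib)
  ultimately show ?case
    using h'(1) by auto
qed simp

definition col_of_height :: "'a set \<Rightarrow> ('a \<Rightarrow> int) \<Rightarrow> 'a \<Rightarrow> 3" where
  "col_of_height V h x = (if x \<in> V then of_int (h x) else undefined)"

lemma col_of_height:
  assumes "\<And>a b. E a b \<Longrightarrow> a \<in> V \<and> b \<in> V" "\<And>a b. E a b \<Longrightarrow> \<bar>h a - h b\<bar> = 1"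
  shows "col_of_height V h \<in> col3_vertices V E" "height_fun V E (col_of_height V h) h"
proof -
  have lift: "pm_lift (col_of_height V h a - col_of_height V h b) = h a - h b" if "E a b" for a b
    using assms that pm_lift_of_int[of "h a - h b"] unfolding col_of_height_def by simp
  have diff: "col_of_height V h a - col_of_height V h b = of_int (h a - h b)" if "E a b" for a b
    using assms(1)[OF that] unfolding col_of_height_def by simp
  have "col_of_height V h a \<noteq> col_of_height V h b" if "E a b" for a b
  proof
    assume "col_of_height V h a = col_of_height V h b"
    then have "of_int (h a - h b) = (0::3)"
      using diff[OF that] by simp
    then have "3 dvd h a - h b"
      by (subst (asm) of_int_eq_0_iff_char_dvd) simp
    then show False
      using assms(2)[OF that] by presburger
  qed
  then show "col_of_height V h \<in> col3_vertices V E"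
    unfolding col3_vertices_def proper_3col_def col_of_height_def by auto
  show "height_fun V E (col_of_height V h) h"
    unfolding height_fun_def using lift by (simp add: col_of_height_def)
qed

text \<open>A recolouring walk carries \<open>hf\<close> to a height of \<open>g\<close> with even difference, moving one
  vertex by \<open>2\<close> per step. On a connected graph two heights of \<open>g\<close> differ by a constant divisible
  by \<open>3\<close>, and by \<open>2\<close> here, so the walk pays half the distance from \<open>hf\<close> to some \<open>hg + 6 j\<close>.\<close>

lemma gdist_col3_ge:
  assumes G: "simple_graph V E" "connected_graph V E"
    and hf: "height_fun V E f hf" and hg: "height_fun V E g hg"
    and even: "\<forall>x\<in>V. even (hg x - hf x)"
    and bound: "\<And>j::int. 2 * int T \<le> (\<Sum>x\<in>V. \<bar>hg x - hf x + 6 * j\<bar>)"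
  shows "enat T \<le> gdist (col3_vertices V E) (col3_adj V) f g"
proof (rule gdist_geI)
  fix cs
  assume cs: "is_walk (col3_adj V) cs" "set cs \<subseteq> col3_vertices V E" "hd cs = f" "last cs = g"
  obtain h' where h': "height_fun V E g h'" "\<forall>x. even (h' x - hf x)"
    "(\<Sum>x\<in>V. \<bar>h' x - hf x\<bar>) \<le> 2 * int (length cs - 1)"
    using height_fun_walk[OF G(1) cs(1,2)] hf cs(3,4) by auto
  obtain r where r: "r \<in> V"
    using G(2) unfolding connected_graph_def by blast
  have "h' a - h' b = hg a - hg b" if "E a b" for a b
    using h'(1) hg that unfolding height_fun_def by simp
  then have "h' a - hg a = h' b - hg b" if "E a b" for a b
    using that by fastforce
  then have const: "h' x - hg x = h' r - hg r" if "x \<in> V" for x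
    using connected_graph_invariant[OF G(2), of "\<lambda>x. h' x - hg x"] that r by blast
  have "of_int (h' r) = (of_int (hg r) :: 3)"
    using h'(1) hg r unfolding height_fun_def by simp
  then have "of_int (h' r - hg r) = (0::3)"
    by simp
  then have "3 dvd h' r - hg r"
    by (subst (asm) of_int_eq_0_iff_char_dvd) simp
  moreover have "even ((h' r - hf r) - (hg r - hf r))"
    using h'(2) even r by simp
  then have "even (h' r - hg r)"
    by simp
  ultimately have "6 dvd h' r - hg r"
    by presburger
  then obtain j where j: "h' r - hg r = 6 * j"
    by (elim dvdE)
  have shift: "hg x - hf x + 6 * j = h' x - hf x" if "x \<in> V" for x
    using const[OF that] j by linarith
  have "(\<Sum>x\<in>V. \<bar>hg x - hf x + 6 * j\<bar>) = (\<Sum>x\<in>V. \<bar>h' x - hf x\<bar>)"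
    by (rule sum.cong[OF refl]) (simp only: shift)
  then show "T \<le> length cs - 1"
    using bound[of j] h'(3) by linarith
qed

lemma gdist_le_diam_C3:
  "f \<in> col3_vertices V E \<Longrightarrow> g \<in> col3_vertices V E \<Longrightarrow>
     gdist (col3_vertices V E) (col3_adj V) f g \<le> diam_C3 V E"
  unfolding diam_C3_def gdiam_def by (rule SUP_upper2, assumption, rule SUP_upper)

section \<open>Two distant colourings of a tree\<close>

lemma exists_upward_closed_subset:
  fixes D :: "'a \<Rightarrow> 'b::linorder"
  assumes "finite B" "K \<le> card B"
  shows "\<exists>S\<subseteq>B. card S = K \<and> (\<forall>x\<in>S. \<forall>y\<in>B. D x < D y \<longrightarrow> y \<in> S)"
  using assms(2)
proof (induction K)
  case 0
  show ?case
    by (intro exI[of _ "{}"]) simp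
next
  case (Suc K)
  then obtain S where S: "S \<subseteq> B" "card S = K" "\<forall>x\<in>S. \<forall>y\<in>B. D x < D y \<longrightarrow> y \<in> S"
    by auto
  have "S \<noteq> B"
    using S(2) Suc.prems by auto
  then have fin: "finite (D ` (B - S))" "D ` (B - S) \<noteq> {}"
    using S(1) assms(1) by auto
  have "Max (D ` (B - S)) \<in> D ` (B - S)"
    by (rule Max_in[OF fin])
  then obtain y where y: "Max (D ` (B - S)) = D y" "y \<in> B - S"
    by (rule imageE)
  have ymax: "D z \<le> D y" if "z \<in> B - S" for z
    using Max_ge[OF fin(1)] that y(1) by simp
  have "card (insert y S) = Suc K"
    using S(1,2) y(2) finite_subset[OF S(1) assms(1)] by simp
  moreover have "\<forall>x\<in>insert y S. \<forall>z\<in>B. D x < D z \<longrightarrow> z \<in> insert y S"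
  proof (intro ballI impI)
    fix x z
    assume xz: "x \<in> insert y S" "z \<in> B" "D x < D z"
    show "z \<in> insert y S"
    proof (rule ccontr)
      assume z: "z \<notin> insert y S"
      then have "D z \<le> D y"
        using ymax xz(2) by blast
      moreover have "x = y"
        using S(3) z xz by blast
      ultimately show False
        using xz(3) by simp
    qed
  qed
  ultimately show ?case
    using S(1) y(2) by (intro exI[of _ "insert y S"]) auto
qed

context rooted_tree
begin

text \<open>The second colouring will have height \<open>depth - 2 * offset S\<close>.\<close>

definition offset :: "'a set \<Rightarrow> 'a \<Rightarrow> int" where
  "offset S x = int (min (depth x) 3) - 1 + of_bool (x \<in> S)"

lemma offset_step:
  assumes S: "S \<subseteq> {x \<in> V. 4 \<le> depth x}" "\<forall>x\<in>S. \<forall>y\<in>V. depth x < depth y \<longrightarrow> y \<in> S"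
    and xy: "y \<in> V" "depth y = Suc (depth x)"
  shows "offset S y = offset S x \<or> offset S y = offset S x + 1"
proof (cases "depth x \<le> 2")
  case True
  then have "x \<notin> S" "y \<notin> S"
    using S(1) xy(2) by auto
  then show ?thesis
    using True xy(2) unfolding offset_def by simp
next
  case False
  have "x \<in> S \<Longrightarrow> y \<in> S"
    using S(2) xy by simp
  then show ?thesis
    using False xy(2) unfolding offset_def by auto
qed

lemma height_offset_edge:
  assumes S: "S \<subseteq> {x \<in> V. 4 \<le> depth x}" "\<forall>x\<in>S. \<forall>y\<in>V. depth x < depth y \<longrightarrow> y \<in> S"
    and e: "E a b"
  shows "\<bar>(int (depth a) - 2 * offset S a) - (int (depth b) - 2 * offset S b)\<bar> = 1"
  using depth_edge[OF e] offset_step[OF S, of a b] offset_step[OF S, of b a] edge_in_V[OF e]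
  by auto

lemma offset_bounds: "-1 \<le> offset S x" "offset S x \<le> 3"
  unfolding offset_def by auto

lemma sum_abs_offset:
  assumes S: "S \<subseteq> {x \<in> V. 4 \<le> depth x}"
  defines "n1 \<equiv> card {x \<in> V. depth x = 1}" and "n2 \<equiv> card {x \<in> V. depth x = 2}"
  shows "(\<Sum>x\<in>V. \<bar>offset S x\<bar>) = 2 * int (card V) - 1 - 2 * int n1 - int n2 + int (card S)"
    and "(\<Sum>x\<in>V. \<bar>offset S x - 3\<bar>) = int (card V) + 3 + 2 * int n1 + int n2 - int (card S)"
proof -
  have count: "(\<Sum>x\<in>V. of_bool (P x)) = int (card {x \<in> V. P x})" for P
    using sum_of_bool_eq[OF finite_V finite_V, of P] by (simp add: Collect_conj_eq Int_commute)
  have "{x \<in> V. depth x = 0} = {r}" "{x \<in> V. x \<in> S} = S"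
    using depth_eq_0_iff root_in_V S by auto
  then have cards: "(\<Sum>x\<in>V. of_bool (depth x = 0)) = (1::int)" "(\<Sum>x\<in>V. of_bool (x \<in> S)) = int (card S)"
    "(\<Sum>x\<in>V. of_bool (depth x = 1)) = int n1" "(\<Sum>x\<in>V. of_bool (depth x = 2)) = int n2"
    unfolding count n1_def n2_def by simp_all
  have pointwise: "\<bar>offset S x\<bar> = 2 - of_bool (depth x = 0) - 2 * of_bool (depth x = 1)
      - of_bool (depth x = 2) + of_bool (x \<in> S)"
    "\<bar>offset S x - 3\<bar> = 1 + 3 * of_bool (depth x = 0) + 2 * of_bool (depth x = 1)
      + of_bool (depth x = 2) - of_bool (x \<in> S)" if "x \<in> V" for x
    using S that unfolding offset_def by auto
  show "(\<Sum>x\<in>V. \<bar>offset S x\<bar>) = 2 * int (card V) - 1 - 2 * int n1 - int n2 + int (card S)"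
    using cards by (simp add: pointwise sum.distrib sum_subtractf sum_distrib_left[symmetric])
  show "(\<Sum>x\<in>V. \<bar>offset S x - 3\<bar>) = int (card V) + 3 + 2 * int n1 + int n2 - int (card S)"
    using cards by (simp add: pointwise sum.distrib sum_subtractf sum_distrib_left[symmetric])
qed

lemma diam_C3_ge:
  assumes S: "S \<subseteq> {x \<in> V. 4 \<le> depth x}" "\<forall>x\<in>S. \<forall>y\<in>V. depth x < depth y \<longrightarrow> y \<in> S"
    and T: "int T \<le> (\<Sum>x\<in>V. \<bar>offset S x\<bar>)" "int T \<le> (\<Sum>x\<in>V. \<bar>offset S x - 3\<bar>)"
  shows "enat T \<le> diam_C3 V E"
proof -
  define hf where "hf x = int (depth x)" for x
  define hg where "hg x = hf x - 2 * offset S x" for x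
  have "\<bar>hf a - hf b\<bar> = 1" "\<bar>hg a - hg b\<bar> = 1" if "E a b" for a b
    using depth_edge[OF that] height_offset_edge[OF S that] unfolding hf_def hg_def by auto
  then have f: "col_of_height V hf \<in> col3_vertices V E" "height_fun V E (col_of_height V hf) hf"
    and g: "col_of_height V hg \<in> col3_vertices V E" "height_fun V E (col_of_height V hg) hg"
    using col_of_height[of E V] edge_in_V by blast+
  have "2 * int T \<le> (\<Sum>x\<in>V. \<bar>hg x - hf x + 6 * j\<bar>)" for j
  proof -
    have "(\<Sum>x\<in>V. \<bar>hg x - hf x + 6 * j\<bar>) = 2 * (\<Sum>x\<in>V. \<bar>offset S x - 3 * j\<bar>)"
      unfolding hg_def sum_distrib_left by (rule sum.cong[OF refl]) arith
    moreover have "int T \<le> (\<Sum>x\<in>V. \<bar>offset S x - 3 * j\<bar>)"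
    proof (cases "j \<le> 0")
      case True
      have "\<bar>offset S x\<bar> \<le> \<bar>offset S x - 3 * j\<bar>" for x
        using True offset_bounds(1)[of S x] by arith
      then have "(\<Sum>x\<in>V. \<bar>offset S x\<bar>) \<le> (\<Sum>x\<in>V. \<bar>offset S x - 3 * j\<bar>)"
        by (intro sum_mono)
      then show ?thesis
        using T(1) by linarith
    next
      case False
      have "\<bar>offset S x - 3\<bar> \<le> \<bar>offset S x - 3 * j\<bar>" for x
        using False offset_bounds(2)[of S x] by arith
      then have "(\<Sum>x\<in>V. \<bar>offset S x - 3\<bar>) \<le> (\<Sum>x\<in>V. \<bar>offset S x - 3 * j\<bar>)"
        by (intro sum_mono)
      then show ?thesis
        using T(2) by linarith
    qed
    ultimately show ?thesis
      by linarith
  qed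
  then have "enat T \<le> gdist (col3_vertices V E) (col3_adj V) (col_of_height V hf) (col_of_height V hg)"
    by (intro gdist_col3_ge[OF simple_graph connected_graph f(2) g(2)]) (simp_all add: hg_def)
  also have "\<dots> \<le> diam_C3 V E"
    by (rule gdist_le_diam_C3[OF f(1) g(1)])
  finally show ?thesis .
qed

end

theorem mainTheorem13:
  fixes V :: "'a set" and E :: "'a \<Rightarrow> 'a \<Rightarrow> bool" and v :: 'a and k :: int
  assumes "is_tree V E"
    and "is_leaf V E v"
    and "k \<ge> 1"
    and "int (card (nbhd_eq V E v 2)) = \<lceil>real (card V) / 2\<rceil> - 4 + k"
    and "int (card (nbhd_ge V E v 4)) \<ge> k"
  shows "diam_C3 V E \<ge> enat (nat \<lfloor>3 * real (card V) / 2\<rfloor> + 1)"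
proof -
  interpret rooted_tree V E v
    using assms(1,2) unfolding is_leaf_def by unfold_locales blast+
  let ?B = "{x \<in> V. 4 \<le> depth x}"
  have "nat k \<le> card ?B"
    using assms(5) unfolding nbhd_ge_depth by (simp add: nat_le_iff)
  then obtain S where S: "S \<subseteq> ?B" "card S = nat k" "\<forall>x\<in>S. \<forall>y\<in>?B. depth x < depth y \<longrightarrow> y \<in> S"
    using exists_upward_closed_subset[of ?B "nat k" depth] finite_V by auto
  have up: "\<forall>x\<in>S. \<forall>y\<in>V. depth x < depth y \<longrightarrow> y \<in> S"
    using S(1,3) by fastforce
  have "{x \<in> V. depth x = 1} = {u \<in> V. E v u}"
    using depth_eq_1_iff by blast
  then have n1: "card {x \<in> V. depth x = 1} = 1"
    using assms(2) unfolding is_leaf_def by simp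
  define n where "n = card V"
  have n2: "int (card {x \<in> V. depth x = 2}) = int ((n + 1) div 2) - 4 + k"
    using assms(4) unfolding nbhd_eq_depth n_def by linarith
  have halves: "n div 2 + (n + 1) div 2 = n"
    by presburger
  have "enat (n + n div 2 + 1) \<le> diam_C3 V E"
    by (rule diam_C3_ge[OF S(1) up])
      (use sum_abs_offset[OF S(1)] n1 n2 halves S(2) assms(3) in \<open>simp_all add: n_def\<close>)
  moreover have "nat \<lfloor>3 * real (card V) / 2\<rfloor> + 1 = n + n div 2 + 1"
    unfolding n_def by linarith
  ultimately show ?thesis
    by simp
qed

end
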